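(* Let $A$ be an observable on $\mathbb C^d$ with orthonormal eigenbasis $\{\varphi_k\}_{k=0}^{d-1}$. For all unit vectors $\Phi,\Psi\in\mathbb C^d$, $$d(T_{A\Phi}\Psi,\Phi)\le 2\,d(\Psi,\Phi).$$
   Context: $\mathcal H=\mathbb C^d$ with the standard inner product; states are unit vectors. An observable $A$ is non-degenerate and identified with its orthonormal eigenbasis $\{\varphi_k\}_{k=0}^{d-1}$. Bures metric: $d(\Phi,\Psi)=\sqrt{2-2|\langle\Phi,\Psi\rangle|}$. Physical imposition operator: $T_{A\Phi}\Psi=\sum_{k=0}^{d-1}|\langle\varphi_k,\Phi\rangle|\,u_k(\Psi)\,\varphi_k$, where $u_k(\Psi)=\langle\varphi_k,\Psi\rangle/|\langle\varphi_k,\Psi\rangle|$ if $\langle\varphi_k,\Psi\rangle\ne0$ and $u_k(\Psi)=1$ otherwise. *)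

theory Defs
  imports "HOL-Analysis.Analysis"
begin

text \<open>The Hilbert space C^d is modelled as complex ^ 'n for a finite index type 'n
  with CARD('n) = d.  Standard inner product, antilinear in the first argument
  (physics convention).\<close>

definition cinner :: "complex ^ 'n \<Rightarrow> complex ^ 'n \<Rightarrow> complex" where
  "cinner x y = (\<Sum>i\<in>UNIV. cnj (x $ i) * y $ i)"

definition bures :: "complex ^ 'n \<Rightarrow> complex ^ 'n \<Rightarrow> real" where
  "bures \<Phi> \<Psi> = sqrt (2 - 2 * cmod (cinner \<Phi> \<Psi>))"

definition orthonormal_basis :: "('n \<Rightarrow> complex ^ 'n) \<Rightarrow> bool" where
  "orthonormal_basis \<phi> \<longleftrightarrow> (\<forall>j k. cinner (\<phi> j) (\<phi> k) = (if j = k then 1 else 0))"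

definition phase :: "complex \<Rightarrow> complex" where
  "phase z = (if z \<noteq> 0 then z / complex_of_real (cmod z) else 1)"

definition imposition :: "('n \<Rightarrow> complex ^ 'n) \<Rightarrow> complex ^ 'n \<Rightarrow> complex ^ 'n \<Rightarrow> complex ^ 'n" where
  "imposition \<phi> \<Phi> \<Psi> =
     (\<Sum>k\<in>UNIV.
        (complex_of_real (cmod (cinner (\<phi> k) \<Phi>)) * phase (cinner (\<phi> k) \<Psi>)) *s \<phi> k)"

end

theory Submission
  imports Defs
begin

(* The Bures distance between unit vectors is the smallest Euclidean
   distance between them up to a global phase:
     bures u v = min over |e| = 1 of norm (u - e v).
   From this characterisation the Bures distance satisfies the triangle inequality.
   Writing a_k, b_k for the coordinates of Phi, Psi in the orthonormal basis, the imposed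
   state T Psi has coordinates |a_k| phase(b_k); it is a unit vector (Parseval) and
   its overlap with Psi is sum_k |a_k| |b_k|, which dominates |<Psi, Phi>|.  Hence
   bures (T Psi) Psi <= bures Psi Phi and the triangle inequality gives
     bures (T Psi) Phi <= bures (T Psi) Psi + bures Psi Phi <= 2 bures Psi Phi. *)

lemma cinner_vec_lambda: "cinner (\<chi> k. f k) (\<chi> k. g k) = (\<Sum>k\<in>UNIV. cnj (f k) * g k)"
  unfolding cinner_def by simp

lemma cinner_scale_right: "cinner v (e *s w) = e * cinner v w"
  unfolding cinner_def by (simp add: sum_distrib_left mult.left_commute)

lemma cinner_scale_left: "cinner (e *s v) w = cnj e * cinner v w"
  unfolding cinner_def by (simp add: sum_distrib_left mult.assoc)

lemma cinner_sum_right: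
  "cinner v (\<Sum>k\<in>UNIV. c k *s (w k :: complex^'n)) = (\<Sum>k\<in>UNIV. c k * cinner v (w k))"
proof -
  have "cinner v (\<Sum>k\<in>UNIV. c k *s w k)
      = (\<Sum>i\<in>UNIV. \<Sum>k\<in>UNIV. c k * (cnj (v $ i) * w k $ i))"
    unfolding cinner_def by (simp add: sum_component sum_distrib_left mult.left_commute)
  also have "\<dots> = (\<Sum>k\<in>UNIV. \<Sum>i\<in>UNIV. c k * (cnj (v $ i) * w k $ i))"
    by (rule sum.swap)
  finally show ?thesis
    unfolding cinner_def by (simp add: sum_distrib_left)
qed

lemma norm_sq_cinner: "(norm (v::complex^'n))^2 = Re (cinner v v)"
proof -
  have "(norm v)^2 = (\<Sum>i\<in>UNIV. (cmod (v$i))^2)"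
    unfolding norm_vec_def L2_set_def by (simp add: sum_nonneg)
  also have "\<dots> = Re (cinner v v)"
    unfolding cinner_def Re_sum by (simp add: cmod_power2 power2_eq_square[symmetric])
  finally show ?thesis .
qed

lemma norm_diff_sq:
  "(norm ((v::complex^'n) - w))^2 = Re (cinner v v) + Re (cinner w w) - 2 * Re (cinner v w)"
proof -
  have "cinner (v - w) (v - w) = cinner v v + cinner w w - cinner v w - cnj (cinner v w)"
    unfolding cinner_def by (simp add: algebra_simps sum.distrib sum_subtractf)
  then show ?thesis by (simp add: norm_sq_cinner)
qed

lemma norm_scale: "norm (e *s (v::complex^'n)) = cmod e * norm v"
  unfolding norm_vec_def L2_set_def
  by (simp add: norm_mult power_mult_distrib sum_distrib_left[symmetric] real_sqrt_mult)

definition coords :: "('n \<Rightarrow> complex ^ 'n) \<Rightarrow> complex ^ 'n \<Rightarrow> complex ^ 'n" where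
  "coords \<phi> v = (\<chi> k. cinner (\<phi> k) v)"

lemma coords_expansion:
  assumes "orthonormal_basis \<phi>"
  shows "coords \<phi> (\<Sum>k\<in>UNIV. c k *s \<phi> k) = (\<chi> k. c k)"
proof -
  have orth: "cinner (\<phi> j) (\<phi> k) = (if j = k then 1 else 0)" for j k
    using assms unfolding orthonormal_basis_def by blast
  show ?thesis
    unfolding coords_def
    by (simp add: vec_eq_iff cinner_sum_right orth if_distrib[of "(*) _"] cong: if_cong)
qed

text \<open>Parseval's identity: taking coordinates preserves the inner product.  Orthonormality
  of the d basis vectors makes the basis matrix unitary, so its rows are orthonormal too.\<close>

lemma coords_isometry:
  assumes "orthonormal_basis \<phi>"
  shows "cinner (coords \<phi> v) (coords \<phi> w) = cinner v (w::complex^'n)"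
proof -
  define U :: "complex^'n^'n" where "U = (\<chi> i k. \<phi> k $ i)"
  define V :: "complex^'n^'n" where "V = (\<chi> k i. cnj (\<phi> k $ i))"
  have "V ** U = mat 1"
    using assms unfolding orthonormal_basis_def
    by (simp add: U_def V_def matrix_matrix_mult_def mat_def vec_eq_iff cinner_def)
  then have "U ** V = mat 1" using matrix_left_right_inverse by blast
  then have rows: "\<And>i j. (\<Sum>k\<in>UNIV. \<phi> k $ i * cnj (\<phi> k $ j)) = (if i = j then 1 else 0)"
    by (simp add: U_def V_def matrix_matrix_mult_def mat_def vec_eq_iff)
  have "cinner (coords \<phi> v) (coords \<phi> w)
      = (\<Sum>k\<in>UNIV. \<Sum>i\<in>UNIV. \<Sum>j\<in>UNIV. cnj (v$i) * w$j * (\<phi> k $ i * cnj (\<phi> k $ j)))"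
    unfolding coords_def cinner_def by (simp add: sum_distrib_left sum_distrib_right ac_simps)
  also have "\<dots> = (\<Sum>i\<in>UNIV. \<Sum>j\<in>UNIV. \<Sum>k\<in>UNIV. cnj (v$i) * w$j * (\<phi> k $ i * cnj (\<phi> k $ j)))"
    by (subst sum.swap) (rule sum.cong[OF refl], rule sum.swap)
  also have "\<dots> = cinner v w"
    unfolding cinner_def
    by (simp add: sum_distrib_left[symmetric] rows if_distrib[of "(*) _"] cong: if_cong)
  finally show ?thesis .
qed

lemma phase_cnj_mult: "cnj (phase z) * z = complex_of_real (cmod z)"
proof (cases "z = 0")
  case False
  have "cnj z * z = complex_of_real ((cmod z)^2)" by (simp only: complex_norm_square mult.commute)
  then show ?thesis using False unfolding phase_def
    by (simp add: power2_eq_square field_simps)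
qed (simp add: phase_def)

lemma phase_norm: "cmod (phase z) = 1"
  unfolding phase_def by (simp add: norm_divide)

lemma norm_diff_phase_sq:
  assumes "cinner u u = 1" "cinner v v = 1" "cmod e = 1"
  shows "(norm (u - e *s v))^2 = 2 - 2 * Re (e * cinner u v)"
proof -
  have "cnj e * e = 1" "e * cnj e = 1"
    using assms(3) by (simp_all add: complex_norm_square[symmetric] mult.commute)
  then have "cinner (e *s v) (e *s v) = 1"
    using assms(2) by (simp add: cinner_scale_left cinner_scale_right mult.assoc[symmetric])
  then show ?thesis
    using assms(1) by (simp add: norm_diff_sq cinner_scale_right)
qed

lemma bures_le_phase_dist:
  assumes "cinner u u = 1" "cinner v v = 1" "cmod e = 1"
  shows "bures u v \<le> norm (u - e *s v)"
proof -
  have "Re (e * cinner u v) \<le> cmod (cinner u v)"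
    using complex_Re_le_cmod[of "e * cinner u v"] assms(3) by (simp add: norm_mult)
  then have "bures u v \<le> sqrt ((norm (u - e *s v))^2)"
    unfolding bures_def norm_diff_phase_sq[OF assms] by simp
  then show ?thesis by simp
qed

lemma bures_attained:
  assumes "cinner u u = 1" "cinner v v = 1"
  obtains e where "cmod e = 1" "norm (u - e *s v) = bures u v"
proof -
  define e where "e = cnj (phase (cinner u v))"
  have unit: "cmod e = 1" unfolding e_def by (simp add: phase_norm)
  have "(norm (u - e *s v))^2 = 2 - 2 * cmod (cinner u v)"
    using norm_diff_phase_sq[OF assms unit] unfolding e_def phase_cnj_mult by simp
  then have "norm (u - e *s v) = bures u v"
    unfolding bures_def by (metis norm_ge_zero real_sqrt_unique)
  with unit show ?thesis by (rule that)
qed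

text \<open>Triangle inequality: compose the optimal phases of the two legs.\<close>

lemma bures_triangle:
  assumes "cinner u u = 1" "cinner v v = 1" "cinner w w = 1"
  shows "bures u w \<le> bures u v + bures v w"
proof -
  obtain e1 where e1: "cmod e1 = 1" "norm (u - e1 *s v) = bures u v"
    using bures_attained[OF assms(1,2)] .
  obtain e2 where e2: "cmod e2 = 1" "norm (v - e2 *s w) = bures v w"
    using bures_attained[OF assms(2,3)] .
  have "cmod (e1 * e2) = 1" using e1(1) e2(1) by (simp add: norm_mult)
  then have "bures u w \<le> norm (u - (e1 * e2) *s w)"
    by (rule bures_le_phase_dist[OF assms(1,3)])
  also have "\<dots> \<le> norm (u - e1 *s v) + norm (e1 *s (v - e2 *s w))"
    using norm_triangle_ineq[of "u - e1 *s v" "e1 *s (v - e2 *s w)"]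
    by (simp add: vector_ssub_ldistrib scalar_mult_eq_scaleR vector_smult_assoc)
  also have "\<dots> = bures u v + bures v w"
    unfolding norm_scale e1 e2 by simp
  finally show ?thesis .
qed

lemma coords_imposition:
  assumes "orthonormal_basis \<phi>"
  shows "coords \<phi> (imposition \<phi> \<Phi> \<Psi>)
       = (\<chi> k. complex_of_real (cmod (cinner (\<phi> k) \<Phi>)) * phase (cinner (\<phi> k) \<Psi>))"
  unfolding imposition_def using coords_expansion[OF assms] .

lemma imposition_unit:
  assumes "orthonormal_basis \<phi>" "cinner \<Phi> \<Phi> = 1"
  shows "cinner (imposition \<phi> \<Phi> \<Psi>) (imposition \<phi> \<Phi> \<Psi>) = 1"
proof -
  have coeff: "cnj (complex_of_real (cmod a) * phase b) * (complex_of_real (cmod a) * phase b)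
             = cnj a * a" for a b :: complex
  proof -
    have "cnj (phase b) * phase b = 1"
      using phase_norm[of b] by (simp add: complex_norm_square[symmetric] mult.commute)
    then show ?thesis
      by (simp add: complex_norm_square[symmetric] power2_eq_square mult.commute mult.left_commute)
  qed
  have "cinner (imposition \<phi> \<Phi> \<Psi>) (imposition \<phi> \<Phi> \<Psi>)
      = cinner (coords \<phi> (imposition \<phi> \<Phi> \<Psi>)) (coords \<phi> (imposition \<phi> \<Phi> \<Psi>))"
    by (rule coords_isometry[OF assms(1), symmetric])
  also have "\<dots> = cinner (coords \<phi> \<Phi>) (coords \<phi> \<Phi>)"
    unfolding coords_imposition[OF assms(1)] unfolding coords_def cinner_vec_lambda coeff ..
  also have "\<dots> = 1" using coords_isometry[OF assms(1)] assms(2) by simp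
  finally show ?thesis .
qed

text \<open>The imposed state overlaps with \<Psi> at least as much as \<Phi> does: its overlap is
  \<open>\<Sum>k |a_k| |b_k|\<close>, which bounds \<open>|\<Sum>k cnj b_k a_k|\<close> by the triangle inequality.\<close>

lemma imposition_closer:
  assumes "orthonormal_basis \<phi>"
  shows "bures (imposition \<phi> \<Phi> \<Psi>) \<Psi> \<le> bures \<Psi> \<Phi>"
proof -
  define a where "a k = cinner (\<phi> k) \<Phi>" for k
  define b where "b k = cinner (\<phi> k) \<Psi>" for k
  have "cmod (cinner \<Psi> \<Phi>) = cmod (\<Sum>k\<in>UNIV. cnj (b k) * a k)"
    using coords_isometry[OF assms(1), of \<Psi> \<Phi>]
    unfolding coords_def cinner_vec_lambda a_def b_def by simp
  also have "\<dots> \<le> (\<Sum>k\<in>UNIV. cmod (a k) * cmod (b k))"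
    using norm_sum[of "\<lambda>k. cnj (b k) * a k" UNIV] by (simp add: norm_mult mult.commute)
  also have "\<dots> = cmod (cinner (imposition \<phi> \<Phi> \<Psi>) \<Psi>)"
  proof -
    have "cinner (imposition \<phi> \<Phi> \<Psi>) \<Psi>
        = (\<Sum>k\<in>UNIV. complex_of_real (cmod (a k) * cmod (b k)))"
      using coords_isometry[OF assms(1), of "imposition \<phi> \<Phi> \<Psi>" \<Psi>, symmetric]
      unfolding coords_imposition[OF assms(1)] unfolding coords_def cinner_vec_lambda a_def b_def
      by (simp add: mult.assoc phase_cnj_mult)
    then show ?thesis
      by (simp only: of_real_sum[symmetric] norm_of_real) (simp add: sum_nonneg)
  qed
  finally show ?thesis unfolding bures_def by simp
qed

theorem proposition2:
  fixes \<phi> :: "'n::finite \<Rightarrow> complex ^ 'n" and \<Phi> \<Psi> :: "complex ^ 'n"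
  assumes "orthonormal_basis \<phi>"
    and "cinner \<Phi> \<Phi> = 1" and "cinner \<Psi> \<Psi> = 1"
  shows "bures (imposition \<phi> \<Phi> \<Psi>) \<Phi> \<le> 2 * bures \<Psi> \<Phi>"
proof -
  have "bures (imposition \<phi> \<Phi> \<Psi>) \<Phi> \<le> bures (imposition \<phi> \<Phi> \<Psi>) \<Psi> + bures \<Psi> \<Phi>"
    using bures_triangle imposition_unit[OF assms(1,2)] assms(2,3) by blast
  also have "\<dots> \<le> 2 * bures \<Psi> \<Phi>"
    using imposition_closer[OF assms(1)] by simp
  finally show ?thesis .
qed

end
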